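(* If $x\in\mathrm{Sort}_n(123,321)$, then $x$ avoids the pattern $123$.
   Context: A permutation contains a pattern $p$ if it has a subsequence order-isomorphic to $p$; otherwise it avoids $p$. For a set $T$ of patterns, the map $s_T$ is defined as follows: the entries of the input permutation are read from left to right, with an initially empty stack. At each step, if the input is nonempty and pushing the next input entry onto the stack produces a stack whose contents, read from top to bottom, avoid every pattern in $T$, that entry is pushed; otherwise the top entry of the stack is popped and appended to the output. When the input is exhausted, the remaining stack entries are popped one at a time to the output. Write $s_{\sigma,\tau}=s_{\{\sigma,\tau\}}$ and $s=s_{\{21\}}$ (West's stack-sorting map). $\mathrm{Sort}_n(\sigma,\tau)$ is the set of $x\in S_n$ with $s(s_{\sigma,\tau}(x))=12\cdots n$. *)

theory Defs
  imports "HOL-Library.Sublist"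
begin

definition perms :: "nat \<Rightarrow> nat list set" where
  "perms n = {x. distinct x \<and> set x = {1..n}}"

definition order_iso :: "nat list \<Rightarrow> nat list \<Rightarrow> bool" where
  "order_iso ys p \<longleftrightarrow> length ys = length p \<and>
     (\<forall>i<length p. \<forall>j<length p. (ys ! i < ys ! j) \<longleftrightarrow> (p ! i < p ! j))"

definition contains :: "nat list \<Rightarrow> nat list \<Rightarrow> bool" where
  "contains x p \<longleftrightarrow> (\<exists>ys. subseq ys x \<and> order_iso ys p)"

definition avoids :: "nat list \<Rightarrow> nat list \<Rightarrow> bool" where
  "avoids x p \<longleftrightarrow> \<not> contains x p"

definition avoids_all :: "nat list set \<Rightarrow> nat list \<Rightarrow> bool" where
  "avoids_all T st \<longleftrightarrow> (\<forall>p\<in>T. avoids st p)"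

text \<open>Arguments: set of patterns, remaining input,
  current stack (head = top, so the list reads the stack from top to bottom). Pushing onto the empty stack is always performed
  (for patterns of length at least 2 a one-entry stack avoids them anyway).\<close>
fun stack_run :: "nat list set \<Rightarrow> nat list \<Rightarrow> nat list \<Rightarrow> nat list" where
  "stack_run T [] st = st"
| "stack_run T (a # xs) [] = stack_run T xs [a]"
| "stack_run T (a # xs) (b # st) =
     (if avoids_all T (a # b # st) then stack_run T xs (a # b # st)
      else b # stack_run T (a # xs) st)"

definition sT :: "nat list set \<Rightarrow> nat list \<Rightarrow> nat list" where
  "sT T x = stack_run T x []"

definition s2 :: "nat list \<Rightarrow> nat list \<Rightarrow> nat list \<Rightarrow> nat list" where
  "s2 \<sigma> \<tau> = sT {\<sigma>, \<tau>}"

definition west_s :: "nat list \<Rightarrow> nat list" where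
  "west_s = sT {[2,1]}"

definition Sort :: "nat \<Rightarrow> nat list \<Rightarrow> nat list \<Rightarrow> nat list set" where
  "Sort n \<sigma> \<tau> = {x \<in> perms n. west_s (s2 \<sigma> \<tau> x) = [1..<n+1]}"

end

theory Submission
  imports Defs
begin

(* If x contains 123, then s_{123,321}(x) contains 231; and West's map s turns every 231 of its
   input into an inversion of its output, so s(s_{123,321}(x)) cannot be the identity.

   For the first claim, follow an occurrence of 123 in the word formed by the stack (read from
   bottom to top) followed by the unread input. It survives until the push of some entry a is
   blocked and the top entry b, which every such occurrence uses, must be popped. As the stack
   avoids 123 and 321, b then plays the role of the 1 or of the 2, and one finds a later entry
   above b that leaves the stack before an entry below b; with b, output first, this is a 231. *)

lemma subseq_rev: "subseq xs ys \<Longrightarrow> subseq (rev xs) (rev ys)"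
  by (induction rule: list_emb.induct) (auto intro: subseq_rev_drop_many)

lemma subseq_set_subset: "subseq xs ys \<Longrightarrow> set xs \<subseteq> set ys"
  by (induction rule: list_emb.induct) auto

lemma sorted_wrt_subseq: "subseq xs ys \<Longrightarrow> sorted_wrt P ys \<Longrightarrow> sorted_wrt P xs"
  by (induction rule: list_emb.induct) (auto elim: list_emb_set)

lemma subseq_append_Cons_cases:
  assumes "subseq zs (u @ b # w)" and "\<not> subseq zs (u @ w)"
  obtains z1 z2 where "zs = z1 @ b # z2" "subseq z1 u" "subseq z2 w"
proof -
  obtain z1 z2 where zs: "zs = z1 @ z2" "subseq z1 u" and z2: "subseq z2 (b # w)"
    using assms(1) by (rule subseq_appendE)
  have "\<not> subseq z2 w"
    using assms(2) zs list_emb_append_mono by blast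
  then obtain z2' where "z2 = b # z2'" "subseq z2' w"
    using z2 by (cases z2) (auto split: if_splits)
  then show ?thesis using that zs by blast
qed

lemma order_iso_rev:
  assumes "order_iso ys p"
  shows "order_iso (rev ys) (rev p)"
proof -
  have len: "length ys = length p" using assms by (simp add: order_iso_def)
  have "rev ys ! i < rev ys ! j \<longleftrightarrow> rev p ! i < rev p ! j" if "i < length p" "j < length p" for i j
    using assms that len by (simp add: order_iso_def rev_nth)
  then show ?thesis using len by (simp add: order_iso_def)
qed

lemma contains_rev: "contains (rev w) p \<longleftrightarrow> contains w (rev p)"
  unfolding contains_def by (metis order_iso_rev rev_rev_ident subseq_rev)

lemma contains_mono: "contains w p \<Longrightarrow> subseq w w' \<Longrightarrow> contains w' p"
  unfolding contains_def using subseq_order.trans by blast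

lemma contains_Cons: "contains w p \<Longrightarrow> contains (b # w) p"
  using contains_mono subseq_Cons' subseq_order.refl by blast

lemma contains_length: "contains w p \<Longrightarrow> length p \<le> length w"
  unfolding contains_def order_iso_def using list_emb_length by fastforce

lemma contains_length2_iff:
  assumes "length p = 2"
  shows "contains w p \<longleftrightarrow> (\<exists>a b. subseq [a,b] w \<and> order_iso [a,b] p)"
proof -
  have "\<exists>a b. ys = [a,b]" if "order_iso ys p" for ys
    using that assms by (auto simp: order_iso_def numeral_2_eq_2 length_Suc_conv)
  then show ?thesis unfolding contains_def by blast
qed

lemma contains_length3_iff:
  assumes "length p = 3"
  shows "contains w p \<longleftrightarrow> (\<exists>a b c. subseq [a,b,c] w \<and> order_iso [a,b,c] p)"
proof -
  have "\<exists>a b c. ys = [a,b,c]" if "order_iso ys p" for ys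
    using that assms by (auto simp: order_iso_def numeral_3_eq_3 length_Suc_conv)
  then show ?thesis unfolding contains_def by blast
qed

lemma order_iso_21: "order_iso [a,b] [2,1] \<longleftrightarrow> b < a"
  by (auto simp: order_iso_def numeral_2_eq_2 All_less_Suc)

lemma order_iso_123: "order_iso [a,b,c] [1,2,3] \<longleftrightarrow> a < b \<and> b < c"
  by (auto simp: order_iso_def numeral_3_eq_3 All_less_Suc)

lemma order_iso_321: "order_iso [a,b,c] [3,2,1] \<longleftrightarrow> b < a \<and> c < b"
  by (auto simp: order_iso_def numeral_3_eq_3 All_less_Suc)

lemma order_iso_231: "order_iso [a,b,c] [2,3,1] \<longleftrightarrow> c < a \<and> a < b"
  by (auto simp: order_iso_def numeral_3_eq_3 All_less_Suc)

lemma contains_21_iff: "contains w [2,1] \<longleftrightarrow> (\<exists>a b. subseq [a,b] w \<and> b < a)"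
  using contains_length2_iff[of "[2,1]" w] order_iso_21 by simp

lemma contains_123_iff: "contains w [1,2,3] \<longleftrightarrow> (\<exists>a b c. subseq [a,b,c] w \<and> a < b \<and> b < c)"
  using contains_length3_iff[of "[1,2,3]" w] order_iso_123 by simp

lemma contains_321_iff: "contains w [3,2,1] \<longleftrightarrow> (\<exists>a b c. subseq [a,b,c] w \<and> b < a \<and> c < b)"
  using contains_length3_iff[of "[3,2,1]" w] order_iso_321 by simp

lemma contains_231_iff: "contains w [2,3,1] \<longleftrightarrow> (\<exists>a b c. subseq [a,b,c] w \<and> c < a \<and> a < b)"
  using contains_length3_iff[of "[2,3,1]" w] order_iso_231 by simp

lemma sorted_not_contains_21: "sorted_wrt (<) w \<Longrightarrow> \<not> contains w [2,1]"
  unfolding contains_21_iff by (fastforce dest: sorted_wrt_subseq)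

lemma set_stack_run: "set (stack_run T xs st) = set xs \<union> set st"
  by (induction T xs st rule: stack_run.induct) auto

lemma subseq_stack_run: "subseq st (stack_run T xs st)"
  by (induction T xs st rule: stack_run.induct) (auto dest: subseq_Cons')

(* p must leave the stack before q enters, hence before r enters, so p is output before r. *)
lemma stack_run_contains_21:
  assumes "[2,1] \<in> T" and "r < p" and "p < q"
    and "(p \<in> set st \<and> subseq [q, r] xs) \<or> subseq [p, q, r] xs"
  shows "contains (stack_run T xs st) [2,1]"
  using assms
proof (induction T xs st rule: stack_run.induct)
  case (1 T st)
  then show ?case by simp
next
  case (2 T a xs)
  then show ?case by (auto split: if_splits)
next
  case (3 T a xs b st)
  show ?case
  proof (cases "avoids_all T (a # b # st)")
    case pushed: True
    have "\<not> (q = a \<and> p \<in> set (b # st))"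
    proof
      assume "q = a \<and> p \<in> set (b # st)"
      then have "subseq [q, p] (a # b # st)" by (auto simp: subseq_singleton_left)
      then have "contains (a # b # st) [2,1]" using \<open>p < q\<close> unfolding contains_21_iff by blast
      then show False using pushed \<open>[2,1] \<in> T\<close> by (simp add: avoids_all_def avoids_def)
    qed
    then have "(p \<in> set (a # b # st) \<and> subseq [q, r] xs) \<or> subseq [p, q, r] xs"
      using "3.prems"(4) by (auto split: if_splits)
    then show ?thesis using "3.IH"(1)[OF pushed] "3.prems"(1-3) pushed by simp
  next
    case popped: False
    show ?thesis
    proof (cases "p = b \<and> \<not> subseq [p, q, r] (a # xs)")
      case True
      then have "subseq [q, r] (a # xs)" using "3.prems"(4) by auto
      then have "r \<in> set (a # xs)" using subseq_set_subset by fastforce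
      then have "r \<in> set (stack_run T (a # xs) st)" by (auto simp: set_stack_run)
      then have "subseq [b, r] (stack_run T (a # xs) (b # st))"
        using popped by (simp add: subseq_singleton_left)
      then show ?thesis using True \<open>r < p\<close> unfolding contains_21_iff by blast
    next
      case False
      then have "(p \<in> set st \<and> subseq [q, r] (a # xs)) \<or> subseq [p, q, r] (a # xs)"
        using "3.prems"(4) by auto
      then show ?thesis using "3.IH"(2)[OF popped] "3.prems"(1-3) popped by (simp add: contains_Cons)
    qed
  qed
qed

lemma west_s_contains_21: "contains y [2,3,1] \<Longrightarrow> contains (west_s y) [2,1]"
  unfolding contains_231_iff west_s_def sT_def
  using stack_run_contains_21[of "{[2,1]}"] by blast

abbreviation patterns_123_321 :: "nat list set" where
  "patterns_123_321 \<equiv> {[1,2,3], [3,2,1]}"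

lemma avoids_123_321_iff:
  "avoids_all patterns_123_321 w \<longleftrightarrow> \<not> contains w [1,2,3] \<and> \<not> contains w [3,2,1]"
  by (simp add: avoids_all_def avoids_def)

lemma avoids_123_321_Cons:
  "avoids_all patterns_123_321 (b # w) \<Longrightarrow> avoids_all patterns_123_321 w"
  unfolding avoids_123_321_iff using contains_Cons by blast

lemma avoids_123_321_short: "length w < 3 \<Longrightarrow> avoids_all patterns_123_321 w"
  unfolding avoids_123_321_iff using contains_length by fastforce

definition inversion_across :: "nat \<Rightarrow> nat list \<Rightarrow> bool" where
  "inversion_across v w \<longleftrightarrow> (\<exists>q r. subseq [q, r] w \<and> r < v \<and> v < q)"

lemma inversion_across_Cons: "inversion_across v w \<Longrightarrow> inversion_across v (b # w)"
  unfolding inversion_across_def by (meson list_emb.list_emb_Cons)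

lemma inversion_across_contains_231: "inversion_across b w \<Longrightarrow> contains (b # w) [2,3,1]"
  unfolding inversion_across_def contains_231_iff by (meson subseq_Cons2)

lemma blocked_push_monotone_pair:
  assumes stack: "avoids_all patterns_123_321 (b # st)"
    and blocked: "\<not> avoids_all patterns_123_321 (a # b # st)"
  obtains c d where "subseq [c, d] (b # st)" and "(a < c \<and> c < d) \<or> (c < a \<and> d < c)"
proof -
  obtain x c d where occ: "subseq [x, c, d] (a # b # st)"
    and monotone: "(x < c \<and> c < d) \<or> (c < x \<and> d < c)"
    using blocked unfolding avoids_123_321_iff contains_123_iff contains_321_iff by blast
  have "\<not> subseq [x, c, d] (b # st)"
    using stack monotone unfolding avoids_123_321_iff contains_123_iff contains_321_iff by blast
  then have "x = a" and "subseq [c, d] (b # st)"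
    using occ by (auto split: if_splits)
  then show ?thesis using that monotone by blast
qed

(* rev st @ a # xs lists the entries not yet output in the order in which they were read. *)
lemma blocked_push_smaller_entry:
  assumes stack: "avoids_all patterns_123_321 (b # st)"
    and blocked: "\<not> avoids_all patterns_123_321 (a # b # st)"
    and no_123: "\<not> contains (rev st @ a # xs) [1,2,3]"
    and "b < q" and "q \<in> set (a # xs)"
  shows "\<exists>r < b. r \<in> set st \<or> subseq [r, q] (a # xs)"
proof -
  obtain c d where cd: "subseq [c, d] (b # st)" and "(a < c \<and> c < d) \<or> (c < a \<and> d < c)"
    using stack blocked by (rule blocked_push_monotone_pair)
  then consider (inc) "a < c" "c < d" | (dec) "c < a" "d < c" by blast
  then show ?thesis
  proof cases
    case inc
    have "\<not> b < c"
    proof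
      assume "b < c"
      then have "subseq [b, c, d] (b # st)" using cd by (auto split: if_splits)
      then show False using stack inc \<open>b < c\<close> unfolding avoids_123_321_iff contains_123_iff by blast
    qed
    then have "a < b" using inc by simp
    moreover have "subseq [a, q] (a # xs)"
      using \<open>a < b\<close> \<open>b < q\<close> \<open>q \<in> set (a # xs)\<close> by (auto simp: subseq_singleton_left)
    ultimately show ?thesis by blast
  next
    case dec
    show ?thesis
    proof (cases "c = b")
      case True
      then have "d \<in> set st" using cd by (simp add: subseq_singleton_left)
      then show ?thesis using dec True by blast
    next
      case False
      then have "subseq [c, d] st" using cd by simp
      then have "subseq [d, c] (rev st)" using subseq_rev[of "[c, d]" st] by simp
      then have "subseq ([d, c] @ [a]) (rev st @ a # xs)"
        by (rule list_emb_append_mono) simp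
      then have "subseq [d, c, a] (rev st @ a # xs)" by simp
      then show ?thesis using no_123 dec unfolding contains_123_iff by blast
    qed
  qed
qed

lemma blocked_push_replaces_witness:
  assumes stack: "avoids_all patterns_123_321 (b # st)"
    and blocked: "\<not> avoids_all patterns_123_321 (a # b # st)"
    and no_123: "\<not> contains (rev st @ a # xs) [1,2,3]"
    and "r < v" and "v < q" and "q \<in> set (a # xs)"
    and "r \<in> set (b # st) \<or> subseq [r, q] (a # xs)"
  obtains r' where "r' < v" and "r' \<in> set st \<or> subseq [r', q] (a # xs)"
proof (cases "r \<in> set st \<or> subseq [r, q] (a # xs)")
  case True
  then show ?thesis using that \<open>r < v\<close> by blast
next
  case False
  then have "r = b" using assms(7) by auto
  then obtain r' where r': "r' < b" "r' \<in> set st \<or> subseq [r', q] (a # xs)"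
    using blocked_push_smaller_entry[OF stack blocked no_123 _ \<open>q \<in> set (a # xs)\<close>]
      \<open>r < v\<close> \<open>v < q\<close> by auto
  have "r' < v" using r'(1) \<open>r = b\<close> \<open>r < v\<close> by simp
  then show ?thesis using that r'(2) by blast
qed

(* If r is still on the stack when q is pushed, q is output before r; otherwise r is popped
   earlier and blocked_push_replaces_witness supplies a smaller witness. *)
lemma stack_run_inversion_across:
  assumes "avoids_all patterns_123_321 st" and "\<not> contains (rev st @ xs) [1,2,3]"
    and "r < v" and "v < q" and "q \<in> set xs" and "r \<in> set st \<or> subseq [r, q] xs"
  shows "inversion_across v (stack_run patterns_123_321 xs st)"
  using assms
proof (induction patterns_123_321 xs st arbitrary: r rule: stack_run.induct)
  case (1 st)
  then show ?case by simp
next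
  case (2 a xs)
  have "q \<in> set xs" and "r \<in> set [a] \<or> subseq [r, q] xs"
    using "2.prems"(3-6) by (auto split: if_splits simp: subseq_singleton_left dest: subseq_Cons')
  then show ?case using "2.hyps" "2.prems"(2-4) avoids_123_321_short by simp
next
  case (3 a xs b st)
  show ?case
  proof (cases "avoids_all patterns_123_321 (a # b # st)")
    case pushed: True
    show ?thesis
    proof (cases "q \<in> set xs")
      case True
      have "r \<in> set (a # b # st) \<or> subseq [r, q] xs"
        using "3.prems"(6) by (auto split: if_splits)
      then show ?thesis using "3.hyps"(1)[OF pushed] pushed True "3.prems"(1-4) by simp
    next
      case False
      then have "q = a" and "r \<in> set (b # st)"
        using "3.prems"(3-6) by (auto split: if_splits simp: subseq_singleton_left dest: subseq_Cons')
      then have "subseq [a, r] (a # b # st)" by (auto simp: subseq_singleton_left)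
      then have "subseq [a, r] (stack_run patterns_123_321 xs (a # b # st))"
        using subseq_stack_run subseq_order.trans by blast
      then show ?thesis using pushed \<open>q = a\<close> "3.prems"(3,4) unfolding inversion_across_def by auto
    qed
  next
    case popped: False
    have avoids_st: "avoids_all patterns_123_321 st"
      using "3.prems"(1) by (rule avoids_123_321_Cons)
    have "subseq (rev st @ a # xs) (rev st @ b # a # xs)"
      by (rule list_emb_append_mono) (auto intro: list_emb.list_emb_Cons)
    then have no_123: "\<not> contains (rev st @ a # xs) [1,2,3]"
      using "3.prems"(2) contains_mono by auto
    obtain r' where "r' < v" and "r' \<in> set st \<or> subseq [r', q] (a # xs)"
      using blocked_push_replaces_witness[OF "3.prems"(1) popped no_123 "3.prems"(3-6)] .
    then have "inversion_across v (stack_run patterns_123_321 (a # xs) st)"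
      using "3.hyps"(2)[OF popped avoids_st no_123 _ "3.prems"(4,5)] by blast
    then show ?thesis using popped by (simp add: inversion_across_Cons)
  qed
qed

lemma popped_entry_inversion_across:
  assumes stack: "avoids_all patterns_123_321 (b # st)"
    and blocked: "\<not> avoids_all patterns_123_321 (a # b # st)"
    and with_b: "contains (rev st @ b # a # xs) [1,2,3]"
    and without_b: "\<not> contains (rev st @ a # xs) [1,2,3]"
  shows "inversion_across b (stack_run patterns_123_321 (a # xs) st)"
proof -
  have avoids_st: "avoids_all patterns_123_321 st"
    using stack by (rule avoids_123_321_Cons)
  obtain p q r where occ: "subseq [p, q, r] (rev st @ b # a # xs)" and "p < q" "q < r"
    using with_b unfolding contains_123_iff by blast
  have "\<not> subseq [p, q, r] (rev st @ a # xs)"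
    using without_b \<open>p < q\<close> \<open>q < r\<close> unfolding contains_123_iff by blast
  with occ obtain z1 z2 where "[p, q, r] = z1 @ b # z2" "subseq z1 (rev st)" "subseq z2 (a # xs)"
    by (rule subseq_append_Cons_cases)
  then consider (first) "p = b" "subseq [q, r] (a # xs)"
    | (middle) "q = b" "p \<in> set st" "r \<in> set (a # xs)"
    | (last) "r = b" "subseq [p, q] (rev st)"
    by (auto simp: Cons_eq_append_conv subseq_singleton_left split: if_splits)
  then show ?thesis
  proof cases
    case first
    then have "q \<in> set (a # xs)" using subseq_set_subset by fastforce
    obtain r' where "r' < b" "r' \<in> set st \<or> subseq [r', q] (a # xs)"
      using blocked_push_smaller_entry[OF stack blocked without_b _ \<open>q \<in> set (a # xs)\<close>]
        first \<open>p < q\<close> by auto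
    then show ?thesis
      using stack_run_inversion_across[OF avoids_st without_b \<open>r' < b\<close> _ \<open>q \<in> set (a # xs)\<close>]
        first \<open>p < q\<close> by auto
  next
    case middle
    then show ?thesis
      using stack_run_inversion_across[OF avoids_st without_b, of p b r] \<open>p < q\<close> \<open>q < r\<close> by auto
  next
    case last
    then have "subseq [q, p] st" using subseq_rev[of "[p, q]" "rev st"] by simp
    then have "subseq [b, q, p] (b # st)" by simp
    then show ?thesis
      using stack \<open>p < q\<close> \<open>q < r\<close> last unfolding avoids_123_321_iff contains_321_iff by blast
  qed
qed

lemma stack_run_contains_231:
  assumes "avoids_all patterns_123_321 st" and "contains (rev st @ xs) [1,2,3]"
  shows "contains (stack_run patterns_123_321 xs st) [2,3,1]"
  using assms
proof (induction patterns_123_321 xs st rule: stack_run.induct)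
  case (1 st)
  then have "contains st [3,2,1]" using contains_rev[of st "[1,2,3]"] by simp
  then show ?case using "1.prems"(1) unfolding avoids_123_321_iff by blast
next
  case (2 a xs)
  then show ?case using avoids_123_321_short by simp
next
  case (3 a xs b st)
  show ?case
  proof (cases "avoids_all patterns_123_321 (a # b # st)")
    case True
    then show ?thesis using "3.hyps"(1) "3.prems"(2) by simp
  next
    case popped: False
    let ?y = "stack_run patterns_123_321 (a # xs) st"
    have "contains ?y [2,3,1] \<or> inversion_across b ?y"
    proof (cases "contains (rev st @ a # xs) [1,2,3]")
      case True
      then show ?thesis
        using "3.hyps"(2)[OF popped] avoids_123_321_Cons[OF "3.prems"(1)] by blast
    next
      case False
      then show ?thesis
        using popped_entry_inversion_across[OF "3.prems"(1) popped _ False] "3.prems"(2) by simp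
    qed
    moreover have "stack_run patterns_123_321 (a # xs) (b # st) = b # ?y" using popped by simp
    ultimately show ?thesis using contains_Cons inversion_across_contains_231 by metis
  qed
qed

theorem proposition4p1:
  fixes n :: nat and x :: "nat list"
  assumes "x \<in> Sort n [1,2,3] [3,2,1]"
  shows "avoids x [1,2,3]"
proof -
  have sorts: "west_s (s2 [1,2,3] [3,2,1] x) = [1..<n+1]"
    using assms by (simp add: Sort_def)
  have "\<not> contains x [1,2,3]"
  proof
    assume "contains x [1,2,3]"
    then have "contains (s2 [1,2,3] [3,2,1] x) [2,3,1]"
      using stack_run_contains_231[of "[]" x] avoids_123_321_short unfolding s2_def sT_def by simp
    then have "contains [1..<n+1] [2,1]" using west_s_contains_21 sorts by metis
    then show False using sorted_not_contains_21 sorted_wrt_upt by blast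
  qed
  then show ?thesis by (simp add: avoids_def)
qed

end
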